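(* There is a deterministic distributed dynamic data structure for triangle membership listing which handles edge insertions and deletions in $O(1)$ amortized rounds.
   Context: Highly dynamic network model: a synchronous network on a fixed set $V$ of $n$ nodes with unique identifiers starts as the empty graph; at the beginning of round $i$ the graph is $G_i=(V,E_i)$, obtained from the previous graph by an adversary inserting and/or deleting an arbitrary (unbounded) set of edges. At the start of each round every node is notified only of the insertions/deletions of edges incident to it; then each node may send a message of $O(\log n)$ bits to each of its current neighbors. A distributed dynamic data structure consists of a local part $DS_v$ at each node $v$; at the end of every round, $DS_v$ may be queried and must answer immediately, without any further communication, either with a correct answer to the query or with the answer $\texttt{inconsistent}$. The amortized round complexity is at most $k$ if for every round $i$, the number of rounds up to round $i$ in which at least one node $v$ has $DS_v$ in an inconsistent state, divided by the total number of topology changes (edge insertions/deletions) that occurred up to round $i$, is at most $k$. Triangle membership listing: the data structure $DS_v$ at each node $v$ must respond at the end of round $i$ to a query of the form $\{v,u,w\}$ with $\texttt{true}$ if $\{v,u,w\}$ forms a triangle in $G_i$, $\texttt{false}$ if it does not, or $\texttt{inconsistent}$. *)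

theory Defs
  imports Main
begin

text \<open>A dynamic graph is a sequence G :: nat => nat set set of edge sets, G 0 being the
  empty graph before round 1; G i is the graph of round i (i >= 1).\<close>

definition valid_dyn_graph :: "nat \<Rightarrow> (nat \<Rightarrow> nat set set) \<Rightarrow> bool" where
  "valid_dyn_graph n G \<longleftrightarrow> G 0 = {} \<and>
     (\<forall>i. \<forall>e\<in>G i. \<exists>u v. e = {u, v} \<and> u \<noteq> v \<and> u < n \<and> v < n)"

definition changes :: "(nat \<Rightarrow> nat set set) \<Rightarrow> nat \<Rightarrow> nat" where
  "changes G i = card ((G i - G (i - 1)) \<union> (G (i - 1) - G i))"

text \<open>Local notifications of node v at the start of round i: the other endpoints of
  inserted / deleted incident edges.\<close>
definition inserted :: "(nat \<Rightarrow> nat set set) \<Rightarrow> nat \<Rightarrow> nat \<Rightarrow> nat set" where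
  "inserted G i v = {u. {v, u} \<in> G i \<and> {v, u} \<notin> G (i - 1)}"

definition deleted :: "(nat \<Rightarrow> nat set set) \<Rightarrow> nat \<Rightarrow> nat \<Rightarrow> nat set" where
  "deleted G i v = {u. {v, u} \<notin> G i \<and> {v, u} \<in> G (i - 1)}"

datatype answer = AnsTrue | AnsFalse | AnsInconsistent

text \<open>A deterministic distributed algorithm with local states of (fixed, sufficiently rich)
  type nat list set.
  In round i node v, in local state s and notified of (ins, del), sends
  msg n v s ins del u to each current neighbour u (None = no message; Some m a message
  whose content is the number m), and then moves to state upd n v s ins del inbox where
  inbox u is the message received from u.  query n v s u w is the answer of DS_v
  (local state s) to the query {v,u,w}, computed without communication.\<close>
record alg =
  init  :: "nat \<Rightarrow> nat \<Rightarrow> nat list set"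
  msg   :: "nat \<Rightarrow> nat \<Rightarrow> nat list set \<Rightarrow> nat set \<Rightarrow> nat set \<Rightarrow> nat \<Rightarrow> nat option"
  upd   :: "nat \<Rightarrow> nat \<Rightarrow> nat list set \<Rightarrow> nat set \<Rightarrow> nat set \<Rightarrow> (nat \<Rightarrow> nat option) \<Rightarrow> nat list set"
  query :: "nat \<Rightarrow> nat \<Rightarrow> nat list set \<Rightarrow> nat \<Rightarrow> nat \<Rightarrow> answer"

text \<open>Global execution: run A n G i v is the local state DS_v at the end of round i.
  The message from u to v in round i is computed from us state at the end of round i-1
  and us notifications of round i.\<close>
fun run :: "alg \<Rightarrow> nat \<Rightarrow> (nat \<Rightarrow> nat set set) \<Rightarrow> nat \<Rightarrow> nat \<Rightarrow> nat list set" where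
  "run A n G 0 = (\<lambda>v. init A n v)"
| "run A n G (Suc i) = (\<lambda>v. upd A n v (run A n G i v) (inserted G (Suc i) v) (deleted G (Suc i) v)
      (\<lambda>u. if {u, v} \<in> G (Suc i)
            then msg A n u (run A n G i u) (inserted G (Suc i) u) (deleted G (Suc i) u) v
            else None))"

text \<open>O(log n)-bit messages: every message actually sent along an edge is a number below
  (n+1)^c, i.e. has at most c * log2 (n+1) bits.\<close>
definition msgs_bounded :: "alg \<Rightarrow> nat \<Rightarrow> nat \<Rightarrow> (nat \<Rightarrow> nat set set) \<Rightarrow> bool" where
  "msgs_bounded A c n G \<longleftrightarrow>
     (\<forall>i u v m. u < n \<and> v < n \<and> {u, v} \<in> G (Suc i) \<and>
        msg A n u (run A n G i u) (inserted G (Suc i) u) (deleted G (Suc i) u) v = Some m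
        \<longrightarrow> m < (n + 1) ^ c)"

definition is_triangle :: "(nat \<Rightarrow> nat set set) \<Rightarrow> nat \<Rightarrow> nat \<Rightarrow> nat \<Rightarrow> nat \<Rightarrow> bool" where
  "is_triangle G i v u w \<longleftrightarrow> {v, u} \<in> G i \<and> {u, w} \<in> G i \<and> {v, w} \<in> G i"

definition answers_sound :: "alg \<Rightarrow> nat \<Rightarrow> (nat \<Rightarrow> nat set set) \<Rightarrow> bool" where
  "answers_sound A n G \<longleftrightarrow>
     (\<forall>i v u w. 1 \<le> i \<and> v < n \<and> u < n \<and> w < n \<longrightarrow>
        query A n v (run A n G i v) u w \<in>
          {AnsInconsistent, if is_triangle G i v u w then AnsTrue else AnsFalse})"

definition inconsistent_at :: "alg \<Rightarrow> nat \<Rightarrow> (nat \<Rightarrow> nat set set) \<Rightarrow> nat \<Rightarrow> nat \<Rightarrow> bool" where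
  "inconsistent_at A n G i v \<longleftrightarrow>
     (\<exists>u w. u < n \<and> w < n \<and> query A n v (run A n G i v) u w = AnsInconsistent)"

definition amortized_le :: "alg \<Rightarrow> nat \<Rightarrow> (nat \<Rightarrow> nat set set) \<Rightarrow> nat \<Rightarrow> bool" where
  "amortized_le A n G k \<longleftrightarrow>
     (\<forall>i. card {j \<in> {1..i}. \<exists>v<n. inconsistent_at A n G j v}
            \<le> k * (\<Sum>j\<in>{1..i}. changes G j))"

end

theory Submission
  imports Defs
begin

text \<open>Every node v keeps, for each other node x, a queue of nodes y whose edge {v,y} has
  changed since x was last told about it, and a queue of nodes y announced by x whose edge
  {v,y} v still has to report back to x.  In each round v sends every neighbour the
  minimum of both queues together with the current status of the corresponding edge,
  which takes O(log n) bits.  Thus v learns the status of {a,b}, for neighbours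
  a and b, either from a or b directly or by announcing b to a and receiving a's answer.
  The invariant is that v's view of {a,b} is correct unless one of these six kinds of queue entries
  is still pending, and v reports inconsistency only in rounds in which messages are
  exchanged.  For the amortized bound the potential is the maximum over live edges {x,z}
  of 2 |announcements from x to z| + |answers from z to x|.  It drops in every round
  with traffic, and c topology changes raise it by at most 2c.\<close>

text \<open>For node v: tri a b is v's view of the edge {a,b}; y \<in> pend x means that x still
  has to learn the status of {v,y} from v; y \<in> echo x means that x announced y and
  still waits for v's status of {v,y}; quiet means that in the last round v received
  nothing and had nothing to announce.\<close>
record local_state =
  nbrs :: "nat set"
  tri :: "nat \<Rightarrow> nat \<Rightarrow> bool"
  pend :: "nat \<Rightarrow> nat set"
  echo :: "nat \<Rightarrow> nat set"
  quiet :: bool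

definition encode_state :: "local_state \<Rightarrow> nat list set" where
  "encode_state s = {[0, x] |x. x \<in> nbrs s} \<union> {[1, a, b] |a b. tri s a b}
     \<union> {[2, x, y] |x y. y \<in> pend s x} \<union> {[3, x, y] |x y. y \<in> echo s x}
     \<union> (if quiet s then {[4]} else {})"

definition decode_state :: "nat list set \<Rightarrow> local_state" where
  "decode_state S = \<lparr>nbrs = {x. [0, x] \<in> S}, tri = (\<lambda>a b. [1, a, b] \<in> S),
     pend = (\<lambda>x. {y. [2, x, y] \<in> S}), echo = (\<lambda>x. {y. [3, x, y] \<in> S}), quiet = ([4] \<in> S)\<rparr>"

lemma decode_encode_state [simp]: "decode_state (encode_state s) = s"
  by (simp add: decode_state_def encode_state_def)

type_synonym item = "(nat \<times> bool) option"

fun encode_item :: "item \<Rightarrow> nat" where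
  "encode_item None = 0"
| "encode_item (Some (y, b)) = 2 * y + 1 + of_bool b"

definition decode_item :: "nat \<Rightarrow> item" where
  "decode_item k = (if k = 0 then None else Some ((k - 1) div 2, odd (k - 1)))"

lemma decode_encode_item [simp]: "decode_item (encode_item x) = x"
  by (cases x rule: encode_item.cases) (auto simp: decode_item_def)

definition item_below :: "nat \<Rightarrow> item \<Rightarrow> bool" where
  "item_below n x \<longleftrightarrow> (\<forall>y b. x = Some (y, b) \<longrightarrow> y < n)"

definition msg_base :: "nat \<Rightarrow> nat" where
  "msg_base n = 2 * n + 1"

lemma encode_item_less: "item_below n x \<Longrightarrow> encode_item x < msg_base n"
  by (cases x rule: encode_item.cases) (auto simp: item_below_def msg_base_def)

lemma decode_item_below: "k < msg_base n \<Longrightarrow> item_below n (decode_item k)"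
  by (auto simp: decode_item_def item_below_def msg_base_def)

type_synonym message = "item \<times> item"

definition encode_msg :: "nat \<Rightarrow> message \<Rightarrow> nat option" where
  "encode_msg n M = (if M = (None, None) then None
     else Some (encode_item (fst M) + msg_base n * encode_item (snd M)))"

fun decode_msg :: "nat \<Rightarrow> nat option \<Rightarrow> message" where
  "decode_msg n None = (None, None)"
| "decode_msg n (Some k) = (decode_item (k mod msg_base n), decode_item (k div msg_base n))"

lemma decode_encode_msg:
  assumes "item_below n p" "item_below n r"
  shows "decode_msg n (encode_msg n (p, r)) = (p, r)"
  using encode_item_less[OF assms(1)] by (simp add: encode_msg_def del: encode_item.simps)

lemma fst_decode_msg_below: "item_below n (fst (decode_msg n m))"
proof (cases m)
  case (Some k)
  have "k mod msg_base n < msg_base n" by (simp add: msg_base_def)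
  then show ?thesis using Some by (simp add: decode_item_below)
qed (simp add: item_below_def)

lemma encode_msg_less:
  assumes "item_below n p" "item_below n r" "encode_msg n (p, r) = Some m"
  shows "m < (n + 1) ^ 4"
proof -
  let ?B = "msg_base n"
  have p: "encode_item p < ?B" and r: "encode_item r + 1 \<le> ?B"
    using encode_item_less[OF assms(1)] encode_item_less[OF assms(2)] by simp_all
  have "m = encode_item p + ?B * encode_item r"
    using assms(3) by (auto simp: encode_msg_def split: if_splits)
  also have "\<dots> < ?B * (encode_item r + 1)" using p by simp
  also have "\<dots> \<le> ?B * ?B" using r by (rule mult_le_mono2)
  also have "\<dots> \<le> (n + 1) ^ 2 * (n + 1) ^ 2"
    by (intro mult_mono) (auto simp: msg_base_def power2_eq_square)
  finally show ?thesis by (simp flip: power_add)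
qed

definition head :: "'a::linorder set \<Rightarrow> 'a option" where
  "head Q = (if Q = {} then None else Some (Min Q))"

definition dequeue :: "'a::linorder set \<Rightarrow> 'a set" where
  "dequeue Q = Q - {Min Q}"

lemma mem_dequeue_or_head: "y \<in> Q \<Longrightarrow> y \<in> dequeue Q \<or> head Q = Some y"
  by (auto simp: dequeue_def head_def)

lemma head_in: "finite Q \<Longrightarrow> head Q = Some y \<Longrightarrow> y \<in> Q"
  unfolding head_def by (metis Min_in option.distinct(1) option.inject)

lemma card_dequeue: "finite Q \<Longrightarrow> card (dequeue Q) = card Q - of_bool (Q \<noteq> {})"
  by (simp add: dequeue_def card_Diff_singleton)

lemma card_dequeue_relay:
  assumes "finite P" "finite R"
  shows "2 * card (dequeue P) + card (dequeue R \<union> set_option (head P)) + of_bool (P \<noteq> {} \<or> R \<noteq> {})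
    \<le> 2 * card P + card R"
proof -
  have "card (dequeue R \<union> set_option (head P)) \<le> card (dequeue R) + card (set_option (head P))"
    by (rule card_Un_le)
  moreover have "card (set_option (head P)) = of_bool (P \<noteq> {})"
    by (simp add: head_def)
  moreover have "card P = 0 \<longleftrightarrow> P = {}" "card R = 0 \<longleftrightarrow> R = {}"
    using assms by simp_all
  ultimately show ?thesis
    using card_dequeue[OF assms(1)] card_dequeue[OF assms(2)]
    by (simp add: of_bool_def split: if_splits)
qed

lemma card_rounds_le_by_potential:
  fixes \<Phi> c :: "nat \<Rightarrow> nat"
  assumes "\<Phi> 0 = 0" and "\<And>t. \<Phi> (Suc t) + of_bool (P t) \<le> \<Phi> t + k * c (Suc t)"
  shows "card {j \<in> {1..i}. P (j - 1)} \<le> k * (\<Sum>j\<in>{1..i}. c j)"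
proof -
  have "(\<Sum>j\<in>{1..i}. of_bool (P (j - 1))) + \<Phi> i \<le> k * (\<Sum>j\<in>{1..i}. c j)"
  proof (induction i)
    case 0
    show ?case using assms(1) by simp
  next
    case (Suc i)
    then show ?case using assms(2)[of i] by (simp add: sum.cl_ivl_Suc distrib_left)
  qed
  then show ?thesis by (simp add: Int_def)
qed

definition initial_state :: local_state where
  "initial_state = \<lparr>nbrs = {}, tri = (\<lambda>_ _. False), pend = (\<lambda>_. {}), echo = (\<lambda>_. {}),
     quiet = True\<rparr>"

definition notify :: "local_state \<Rightarrow> nat set \<Rightarrow> nat set \<Rightarrow> local_state" where
  "notify s I D = s\<lparr>nbrs := (nbrs s - D) \<union> I,
     pend := (\<lambda>x. (if x \<in> I then {} else pend s x) \<union> (I \<union> D - {x})),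
     echo := (\<lambda>x. if x \<in> I then {} else echo s x)\<rparr>"

definition report :: "local_state \<Rightarrow> nat option \<Rightarrow> item" where
  "report s = map_option (\<lambda>y. (y, y \<in> nbrs s))"

lemma report_eq_Some [simp]: "report s q = Some (b, e) \<longleftrightarrow> q = Some b \<and> e = (b \<in> nbrs s)"
  by (auto simp: report_def)

definition outgoing :: "local_state \<Rightarrow> nat \<Rightarrow> message" where
  "outgoing s z = (report s (head (pend s z)), report s (head (echo s z)))"

definition reports :: "(nat \<Rightarrow> message) \<Rightarrow> nat \<Rightarrow> nat \<Rightarrow> bool set" where
  "reports M a b = {e. fst (M a) = Some (b, e) \<or> snd (M a) = Some (b, e) \<or>
     fst (M b) = Some (a, e) \<or> snd (M b) = Some (a, e)}"

definition receive :: "local_state \<Rightarrow> (nat \<Rightarrow> message) \<Rightarrow> local_state" where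
  "receive s M = s\<lparr>tri := (\<lambda>a b. if reports M a b = {} then tri s a b else True \<in> reports M a b),
     pend := (\<lambda>x. dequeue (pend s x)),
     echo := (\<lambda>x. dequeue (echo s x) \<union> {y. \<exists>e. fst (M x) = Some (y, e)}),
     quiet := (\<forall>x \<in> nbrs s. M x = (None, None) \<and> pend s x = {})\<rparr>"

definition answer_query :: "local_state \<Rightarrow> nat \<Rightarrow> nat \<Rightarrow> answer" where
  "answer_query s u w = (if \<not> quiet s then AnsInconsistent
     else if u \<in> nbrs s \<and> w \<in> nbrs s \<and> u \<noteq> w \<and> tri s u w then AnsTrue else AnsFalse)"

definition triangle_alg :: alg where
  "triangle_alg = \<lparr>init = (\<lambda>n v. encode_state initial_state),
     msg = (\<lambda>n v S I D. encode_msg n \<circ> outgoing (notify (decode_state S) I D)),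
     upd = (\<lambda>n v S I D inbox.
       encode_state (receive (notify (decode_state S) I D) (decode_msg n \<circ> inbox))),
     query = (\<lambda>n v S. answer_query (decode_state S))\<rparr>"

lemma triangle_alg_simps [simp]:
  "init triangle_alg n v = encode_state initial_state"
  "msg triangle_alg n v S I D z = encode_msg n (outgoing (notify (decode_state S) I D) z)"
  "upd triangle_alg n v S I D inbox =
     encode_state (receive (notify (decode_state S) I D) (decode_msg n \<circ> inbox))"
  "query triangle_alg n v S u w = answer_query (decode_state S) u w"
  by (simp_all add: triangle_alg_def)

text \<open>v's view of {a,b} is still going to be updated: a or b still has to report the
  edge to v, or v still has to announce b to a (or a to b), whose answer then reports
  the edge.\<close>
definition scheduled :: "(nat \<Rightarrow> local_state) \<Rightarrow> nat \<Rightarrow> nat \<Rightarrow> nat \<Rightarrow> bool" where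
  "scheduled \<sigma> v a b \<longleftrightarrow> b \<in> pend (\<sigma> a) v \<or> b \<in> echo (\<sigma> a) v \<or> a \<in> pend (\<sigma> b) v \<or>
     a \<in> echo (\<sigma> b) v \<or> a \<in> pend (\<sigma> v) b \<or> b \<in> pend (\<sigma> v) a"

locale dynamic_network =
  fixes n :: nat and G :: "nat \<Rightarrow> nat set set"
  assumes valid: "valid_dyn_graph n G"
begin

abbreviation nbhd :: "nat \<Rightarrow> nat \<Rightarrow> nat set" where
  "nbhd t v \<equiv> {u. {v, u} \<in> G t}"

abbreviation changed :: "nat \<Rightarrow> nat \<Rightarrow> nat set" where
  "changed t v \<equiv> inserted G t v \<union> deleted G t v"

definition state :: "nat \<Rightarrow> nat \<Rightarrow> local_state" where
  "state t v = decode_state (run triangle_alg n G t v)"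

definition notified :: "nat \<Rightarrow> nat \<Rightarrow> local_state" where
  "notified t v = notify (state t v) (inserted G (Suc t) v) (deleted G (Suc t) v)"

definition inbox :: "nat \<Rightarrow> nat \<Rightarrow> nat \<Rightarrow> message" where
  "inbox t v u = (if {u, v} \<in> G (Suc t) then outgoing (notified t u) v else (None, None))"

lemma G_0: "G 0 = {}"
  using valid by (simp add: valid_dyn_graph_def)

lemma edge_ends: "{x, y} \<in> G t \<Longrightarrow> x < n \<and> y < n \<and> x \<noteq> y"
  using valid unfolding valid_dyn_graph_def by (metis doubleton_eq_iff)

lemma changed_below: "changed t v \<subseteq> {..<n}"
  using edge_ends by (auto simp: inserted_def deleted_def)

lemma query_run:
  "query triangle_alg n v (run triangle_alg n G t v) u w = answer_query (state t v) u w"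
  unfolding state_def by (rule triangle_alg_simps)

lemma state_0: "state 0 v = initial_state"
  by (simp add: state_def)

lemma state_Suc_decoded: "state (Suc t) v = receive (notified t v)
    (\<lambda>u. decode_msg n
      (if {u, v} \<in> G (Suc t) then encode_msg n (outgoing (notified t u) v) else None))"
  unfolding state_def notified_def
  by (simp only: run.simps triangle_alg_simps comp_def decode_encode_state)

lemma nbrs_state: "nbrs (state t v) = nbhd t v"
proof (induction t arbitrary: v)
  case 0
  show ?case by (simp add: state_0 initial_state_def G_0)
next
  case (Suc t)
  then show ?case
    by (auto simp: state_Suc_decoded receive_def notified_def notify_def inserted_def deleted_def)
qed

lemma nbrs_notified: "nbrs (notified t v) = nbhd (Suc t) v"
  by (auto simp: notified_def notify_def nbrs_state inserted_def deleted_def)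

lemma queues_notified_subset:
  "pend (notified t v) x \<subseteq> pend (state t v) x \<union> changed (Suc t) v"
  "echo (notified t v) x \<subseteq> echo (state t v) x"
  by (auto simp: notified_def notify_def)

lemma queues_state_below: "pend (state t v) x \<subseteq> {..<n} \<and> echo (state t v) x \<subseteq> {..<n}"
proof (induction t arbitrary: v x)
  case 0
  show ?case by (simp add: state_0 initial_state_def)
next
  case (Suc t)
  have "pend (notified t v) x \<subseteq> {..<n}" "echo (notified t v) x \<subseteq> {..<n}"
    using queues_notified_subset Suc.IH changed_below by blast+
  moreover have "y < n" if "fst (decode_msg n m) = Some (y, b)" for m y b
    using fst_decode_msg_below[of n m] that by (simp add: item_below_def)
  ultimately show ?case
    by (auto simp: state_Suc_decoded receive_def dequeue_def)
qed

lemma queues_notified_below: "pend (notified t v) x \<subseteq> {..<n}" "echo (notified t v) x \<subseteq> {..<n}"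
  using queues_notified_subset queues_state_below changed_below by blast+

lemma finite_queues_notified: "finite (pend (notified t v) x)" "finite (echo (notified t v) x)"
  by (simp_all add: finite_subset[OF queues_notified_below(1)]
      finite_subset[OF queues_notified_below(2)])

lemma outgoing_below:
  "item_below n (fst (outgoing (notified t u) v))" "item_below n (snd (outgoing (notified t u) v))"
  using queues_notified_below
    head_in[OF finite_queues_notified(1)] head_in[OF finite_queues_notified(2)]
  by (fastforce simp: outgoing_def report_def item_below_def)+

lemma state_Suc: "state (Suc t) v = receive (notified t v) (inbox t v)"
proof -
  have "decode_msg n (encode_msg n (outgoing (notified t u) v)) = outgoing (notified t u) v" for u
    using decode_encode_msg[OF outgoing_below[of t u v]] by simp
  then show ?thesis
    unfolding state_Suc_decoded
    by (intro arg_cong[where f = "receive (notified t v)"]) (auto simp: inbox_def)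
qed

lemma pend_state_Suc: "pend (state (Suc t) x) z = dequeue (pend (notified t x) z)"
  by (simp add: state_Suc receive_def)

lemma echo_state_Suc: "echo (state (Suc t) z) x = dequeue (echo (notified t z) x) \<union>
    (if {x, z} \<in> G (Suc t) then set_option (head (pend (notified t x) z)) else {})"
  by (auto simp: state_Suc receive_def inbox_def outgoing_def report_def)

lemma quiet_state_Suc: "quiet (state (Suc t) v) \<longleftrightarrow>
    (\<forall>x \<in> nbhd (Suc t) v.
      pend (notified t x) v = {} \<and> echo (notified t x) v = {} \<and> pend (notified t v) x = {})"
  by (auto simp: state_Suc receive_def nbrs_notified inbox_def outgoing_def report_def head_def
      insert_commute)

definition sends :: "nat \<Rightarrow> nat \<Rightarrow> nat \<Rightarrow> nat \<Rightarrow> bool" where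
  "sends t a v b \<longleftrightarrow> head (pend (notified t a) v) = Some b \<or> head (echo (notified t a) v) = Some b"

lemma report_received:
  assumes "x \<in> nbhd (Suc t) v"
  shows "fst (inbox t v x) = Some (b, e) \<or> snd (inbox t v x) = Some (b, e) \<longleftrightarrow>
    sends t x v b \<and> e = ({x, b} \<in> G (Suc t))"
  using assms by (auto simp: inbox_def insert_commute sends_def outgoing_def nbrs_notified)

lemma tri_state_Suc:
  assumes "a \<in> nbhd (Suc t) v" "b \<in> nbhd (Suc t) v"
  shows "tri (state (Suc t) v) a b =
    (if sends t a v b \<or> sends t b v a then {a, b} \<in> G (Suc t) else tri (state t v) a b)"
proof -
  have "reports (inbox t v) a b =
      (if sends t a v b \<or> sends t b v a then {{a, b} \<in> G (Suc t)} else {})"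
    unfolding reports_def disj_assoc[symmetric] report_received[OF assms(1)]
      report_received[OF assms(2)]
    by (auto simp: insert_commute)
  then show ?thesis by (simp add: state_Suc receive_def notified_def notify_def)
qed

lemma inserted_sym: "v \<in> inserted G t a \<longleftrightarrow> a \<in> inserted G t v"
  by (simp add: inserted_def insert_commute)

lemma scheduled_progress:
  assumes a: "a \<in> nbhd (Suc t) v" and b: "b \<in> nbhd (Suc t) v"
    and "scheduled (notified t) v a b"
  shows "tri (state (Suc t) v) a b = ({a, b} \<in> G (Suc t)) \<or> scheduled (state (Suc t)) v a b"
proof -
  have sent: "tri (state (Suc t) v) a b = ({a, b} \<in> G (Suc t))" if "sends t a v b \<or> sends t b v a"
    using tri_state_Suc[OF a b] that by simp
  have relayed: "y \<in> echo (state (Suc t) z) x"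
    if "{x, z} \<in> G (Suc t)" "head (pend (notified t x) z) = Some y" for x y z
    using that by (simp add: echo_state_Suc)
  have "{v, a} \<in> G (Suc t)" "{v, b} \<in> G (Suc t)" using a b by simp_all
  then show ?thesis
    using assms(3) sent relayed
      mem_dequeue_or_head[of b "pend (notified t a) v"]
      mem_dequeue_or_head[of b "echo (notified t a) v"]
      mem_dequeue_or_head[of a "pend (notified t b) v"]
      mem_dequeue_or_head[of a "echo (notified t b) v"]
      mem_dequeue_or_head[of a "pend (notified t v) b"]
      mem_dequeue_or_head[of b "pend (notified t v) a"]
    unfolding scheduled_def pend_state_Suc echo_state_Suc sends_def by blast
qed

lemma queues_state_notified:
  assumes "z \<notin> inserted G (Suc t) x"
  shows "pend (state t x) z \<subseteq> pend (notified t x) z" "echo (state t x) z \<subseteq> echo (notified t x) z"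
  using assms by (auto simp: notified_def notify_def)

lemma scheduled_notified_if_kept:
  assumes "scheduled (state t) v a b" "a \<notin> inserted G (Suc t) v" "b \<notin> inserted G (Suc t) v"
  shows "scheduled (notified t) v a b"
proof -
  have "v \<notin> inserted G (Suc t) a" "v \<notin> inserted G (Suc t) b"
    using assms(2,3) inserted_sym by blast+
  then show ?thesis
    using assms queues_state_notified unfolding scheduled_def by blast
qed

lemma scheduled_notified_if_changed:
  assumes "a \<in> nbhd (Suc t) v" "b \<in> nbhd (Suc t) v" "a \<noteq> b"
    and "a \<in> inserted G (Suc t) v \<or> b \<in> inserted G (Suc t) v \<or> b \<in> changed (Suc t) a"
  shows "scheduled (notified t) v a b"
proof -
  have "b \<noteq> v" using assms(2) edge_ends by blast
  then show ?thesis
    using assms by (auto simp: scheduled_def notified_def notify_def)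
qed

definition tri_invariant :: "nat \<Rightarrow> bool" where
  "tri_invariant t \<longleftrightarrow> (\<forall>v a b. a \<in> nbhd t v \<longrightarrow> b \<in> nbhd t v \<longrightarrow> a \<noteq> b \<longrightarrow>
     tri (state t v) a b = ({a, b} \<in> G t) \<or> scheduled (state t) v a b)"

lemma tri_invariant_Suc:
  assumes "tri_invariant t"
  shows "tri_invariant (Suc t)"
  unfolding tri_invariant_def
proof (intro allI impI)
  fix v a b
  assume a: "a \<in> nbhd (Suc t) v" and b: "b \<in> nbhd (Suc t) v" and "a \<noteq> b"
  show "tri (state (Suc t) v) a b = ({a, b} \<in> G (Suc t)) \<or> scheduled (state (Suc t)) v a b"
  proof (cases "a \<in> inserted G (Suc t) v \<or> b \<in> inserted G (Suc t) v \<or> b \<in> changed (Suc t) a")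
    case True
    then show ?thesis
      using scheduled_progress[OF a b] scheduled_notified_if_changed[OF a b \<open>a \<noteq> b\<close>] by blast
  next
    case False
    then have "a \<in> nbhd t v" "b \<in> nbhd t v"
      using a b by (auto simp: inserted_def)
    then have "tri (state t v) a b = ({a, b} \<in> G t) \<or> scheduled (state t) v a b"
      using assms \<open>a \<noteq> b\<close> unfolding tri_invariant_def by blast
    moreover have "({a, b} \<in> G t) = ({a, b} \<in> G (Suc t))"
      using False by (auto simp: inserted_def deleted_def)
    ultimately show ?thesis
      using False tri_state_Suc[OF a b] scheduled_progress[OF a b]
        scheduled_notified_if_kept[of t v a b] by auto
  qed
qed

lemma tri_invariant: "tri_invariant t"
proof (induction t)
  case 0
  show ?case by (simp add: tri_invariant_def G_0)
qed (rule tri_invariant_Suc)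

lemma quiet_not_scheduled:
  assumes "quiet (state (Suc t) v)" "a \<in> nbhd (Suc t) v" "b \<in> nbhd (Suc t) v"
  shows "\<not> scheduled (state (Suc t)) v a b"
proof -
  have "pend (state (Suc t) x) v = {} \<and> echo (state (Suc t) x) v = {} \<and>
      pend (state (Suc t) v) x = {}"
    if "x \<in> nbhd (Suc t) v" for x
    using assms(1) that
    by (simp add: quiet_state_Suc pend_state_Suc echo_state_Suc dequeue_def head_def)
  then show ?thesis using assms(2,3) by (simp add: scheduled_def)
qed

lemma answers_sound_triangle_alg: "answers_sound triangle_alg n G"
  unfolding answers_sound_def
proof (intro allI impI)
  fix i v u w :: nat
  assume "1 \<le> i \<and> v < n \<and> u < n \<and> w < n"
  then obtain t where i: "i = Suc t" by (cases i) auto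
  have "tri (state i v) u w = ({u, w} \<in> G i)"
    if "quiet (state i v)" "u \<in> nbhd i v" "w \<in> nbhd i v" "u \<noteq> w"
    using that tri_invariant[of i] quiet_not_scheduled[of t v u w]
    unfolding tri_invariant_def i by blast
  moreover have "u \<noteq> w" if "{u, w} \<in> G i" using edge_ends that by blast
  ultimately show "query triangle_alg n v (run triangle_alg n G i v) u w
      \<in> {AnsInconsistent, if is_triangle G i v u w then AnsTrue else AnsFalse}"
    unfolding query_run by (auto simp: answer_query_def is_triangle_def nbrs_state)
qed

lemma msgs_bounded_triangle_alg: "msgs_bounded triangle_alg 4 n G"
  unfolding msgs_bounded_def
proof (intro allI impI)
  fix i u v m :: nat
  assume "u < n \<and> v < n \<and> {u, v} \<in> G (Suc i) \<and>
    msg triangle_alg n u (run triangle_alg n G i u) (inserted G (Suc i) u) (deleted G (Suc i) u) v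
      = Some m"
  then have "encode_msg n (fst (outgoing (notified i u) v), snd (outgoing (notified i u) v))
      = Some m"
    by (simp add: notified_def state_def)
  then show "m < (n + 1) ^ 4"
    using encode_msg_less outgoing_below by blast
qed

lemma finite_G: "finite (G t)"
proof (rule finite_subset)
  show "G t \<subseteq> Pow {..<n}" using valid unfolding valid_dyn_graph_def by fastforce
qed simp

lemma card_changed_le: "card (changed t x) \<le> changes G t"
proof -
  have "card (changed t x) \<le> card ((G t - G (t - 1)) \<union> (G (t - 1) - G t))"
  proof (rule card_inj_on_le)
    show "inj_on (\<lambda>y. {x, y}) (changed t x)" by (auto simp: inj_on_def doubleton_eq_iff)
    show "(\<lambda>y. {x, y}) ` changed t x \<subseteq> (G t - G (t - 1)) \<union> (G (t - 1) - G t)"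
      by (auto simp: inserted_def deleted_def)
    show "finite ((G t - G (t - 1)) \<union> (G (t - 1) - G t))" using finite_G by simp
  qed
  then show ?thesis by (simp add: changes_def)
qed

text \<open>An announcement from x to z costs two rounds: x sends it, then z answers it.  The
  potential is a maximum rather than a sum because a change at x enters the queues of
  all of x's neighbours, which are served in parallel.\<close>
definition backlog :: "nat \<Rightarrow> nat \<Rightarrow> nat \<Rightarrow> nat" where
  "backlog t x z =
     (if {x, z} \<in> G t then 2 * card (pend (state t x) z) + card (echo (state t z) x) else 0)"

definition max_backlog :: "nat \<Rightarrow> nat" where
  "max_backlog t = Max (insert 0 ((\<lambda>(x, z). backlog t x z) ` ({..<n} \<times> {..<n})))"

lemma max_backlog_le_iff: "max_backlog t \<le> M \<longleftrightarrow> (\<forall>x<n. \<forall>z<n. backlog t x z \<le> M)"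
  unfolding max_backlog_def by (subst Max_le_iff) auto

definition busy :: "nat \<Rightarrow> nat \<Rightarrow> nat \<Rightarrow> bool" where
  "busy t x z \<longleftrightarrow> {x, z} \<in> G (Suc t) \<and> (pend (notified t x) z \<noteq> {} \<or> echo (notified t z) x \<noteq> {})"

definition active :: "nat \<Rightarrow> bool" where
  "active t \<longleftrightarrow> (\<exists>x<n. \<exists>z<n. busy t x z)"

lemma backlog_notified_le:
  assumes "x < n" "z < n" "{x, z} \<in> G (Suc t)"
  shows "2 * card (pend (notified t x) z) + card (echo (notified t z) x)
    \<le> max_backlog t + 2 * changes G (Suc t)"
proof -
  have fin: "finite (pend (state t x) z)" "finite (changed (Suc t) x)"
    using finite_subset[OF conjunct1[OF queues_state_below] finite_lessThan]
      finite_subset[OF changed_below finite_lessThan] by blast+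
  have "card (pend (notified t x) z) \<le> card (pend (state t x) z \<union> changed (Suc t) x)"
    using fin queues_notified_subset(1) by (simp add: card_mono)
  also have "\<dots> \<le> card (pend (state t x) z) + changes G (Suc t)"
    using card_Un_le[of "pend (state t x) z" "changed (Suc t) x"] card_changed_le[of "Suc t" x]
    by linarith
  finally have pend_le:
    "card (pend (notified t x) z) \<le> card (pend (state t x) z) + changes G (Suc t)" .
  show ?thesis
  proof (cases "z \<in> inserted G (Suc t) x")
    case True
    then have "pend (notified t x) z \<subseteq> changed (Suc t) x" and no_echo: "echo (notified t z) x = {}"
      using inserted_sym[of x "Suc t" z] by (auto simp: notified_def notify_def)
    then have "card (pend (notified t x) z) \<le> changes G (Suc t)"
      using card_mono[OF fin(2)] card_changed_le[of "Suc t" x] order_trans by blast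
    then show ?thesis using no_echo by simp
  next
    case False
    then have "{x, z} \<in> G t" "echo (notified t z) x = echo (state t z) x"
      using assms(3) inserted_sym[of x "Suc t" z]
      by (auto simp: inserted_def notified_def notify_def)
    moreover have "backlog t x z \<le> max_backlog t"
      using max_backlog_le_iff[of t "max_backlog t"] assms(1,2) by blast
    ultimately have "2 * card (pend (state t x) z) + card (echo (notified t z) x) \<le> max_backlog t"
      by (simp add: backlog_def)
    then show ?thesis using pend_le by linarith
  qed
qed

lemma backlog_Suc:
  assumes "x < n" "z < n"
  shows "backlog (Suc t) x z + of_bool (busy t x z) \<le> max_backlog t + 2 * changes G (Suc t)"
proof (cases "{x, z} \<in> G (Suc t)")
  case True
  let ?P = "pend (notified t x) z" and ?R = "echo (notified t z) x"
  have "backlog (Suc t) x z + of_bool (busy t x z) \<le> 2 * card ?P + card ?R"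
    using card_dequeue_relay[OF finite_queues_notified] True
    by (simp add: backlog_def busy_def pend_state_Suc echo_state_Suc)
  then show ?thesis using backlog_notified_le[OF assms True] by linarith
qed (simp add: backlog_def busy_def)

lemma backlog_Suc_idle: "\<not> busy t x z \<Longrightarrow> backlog (Suc t) x z = 0"
  by (simp add: backlog_def busy_def pend_state_Suc echo_state_Suc dequeue_def head_def)

lemma max_backlog_Suc:
  "max_backlog (Suc t) + of_bool (active t) \<le> max_backlog t + 2 * changes G (Suc t)"
proof -
  let ?M = "max_backlog t + 2 * changes G (Suc t)"
  have active_le: "of_bool (active t) \<le> ?M"
  proof (cases "active t")
    case True
    then obtain x z where "x < n" "z < n" "busy t x z" unfolding active_def by blast
    then show ?thesis using backlog_Suc[of x z t] by simp
  qed simp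
  have "backlog (Suc t) x z + of_bool (active t) \<le> ?M" if "x < n" "z < n" for x z
    using backlog_Suc[OF that, of t] backlog_Suc_idle[of t x z] active_le that
    by (cases "busy t x z") (auto simp: active_def)
  then have "max_backlog (Suc t) \<le> ?M - of_bool (active t)"
    by (simp add: max_backlog_le_iff le_diff_conv2 active_le)
  then show ?thesis using active_le by linarith
qed

lemma max_backlog_0: "max_backlog 0 = 0"
  using max_backlog_le_iff[of 0 0] by (simp add: backlog_def G_0)

lemma inconsistent_active:
  assumes "v < n" "inconsistent_at triangle_alg n G (Suc t) v"
  shows "active t"
proof -
  have "\<not> quiet (state (Suc t) v)"
    using assms(2) unfolding inconsistent_at_def query_run
    by (auto simp: answer_query_def split: if_splits)
  then obtain x where x: "x \<in> nbhd (Suc t) v"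
    and "pend (notified t x) v \<noteq> {} \<or> echo (notified t x) v \<noteq> {} \<or> pend (notified t v) x \<noteq> {}"
    unfolding quiet_state_Suc by blast
  moreover have "x < n" "{x, v} \<in> G (Suc t)" using x edge_ends by (auto simp: insert_commute)
  ultimately show ?thesis
    using assms(1) x unfolding active_def busy_def by blast
qed

lemma amortized_le_triangle_alg: "amortized_le triangle_alg n G 2"
  unfolding amortized_le_def
proof
  fix i
  let ?I = "{j \<in> {1..i}. \<exists>v<n. inconsistent_at triangle_alg n G j v}"
  have "?I \<subseteq> {j \<in> {1..i}. active (j - 1)}"
    using inconsistent_active by (auto simp: Suc_le_eq gr0_conv_Suc)
  then have "card ?I \<le> card {j \<in> {1..i}. active (j - 1)}"
    by (intro card_mono) auto
  also have "\<dots> \<le> 2 * (\<Sum>j\<in>{1..i}. changes G j)"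
    using card_rounds_le_by_potential[OF max_backlog_0 max_backlog_Suc] .
  finally show "card ?I \<le> 2 * (\<Sum>j\<in>{1..i}. changes G j)" .
qed

end

theorem theorem1:
  "\<exists>(A::alg) (c::nat) (k::nat). \<forall>n G. valid_dyn_graph n G \<longrightarrow>
      msgs_bounded A c n G \<and> answers_sound A n G \<and> amortized_le A n G k"
proof (intro exI allI impI conjI)
  fix n G
  assume "valid_dyn_graph n G"
  then interpret dynamic_network n G by unfold_locales
  show "msgs_bounded triangle_alg 4 n G" by (rule msgs_bounded_triangle_alg)
  show "answers_sound triangle_alg n G" by (rule answers_sound_triangle_alg)
  show "amortized_le triangle_alg n G 2" by (rule amortized_le_triangle_alg)
qed

end
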